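(* There are lattice reduction triples and formulas of mv-ATL*$_\to$ that do not satisfy the translation condition, i.e., for which $[\![\varphi]\!]_{M,\xi}\in f^{-1}(x)$ iff $[\![\varphi]\!]_{f(M),\xi}=x$ fails for some mv-CGS $M$, state or path $\xi$, and value $x$.
   Context: Let $\mathcal{L}=(L,\leq)$ be a finite lattice with meet $\sqcap$, join $\sqcup$, least element $\bot$ and greatest element $\top$; for a family of elements, $\inf$ denotes its greatest lower bound (lattice meet) and $\bigsqcup$ its least upper bound (lattice join). Given a countable set $\mathcal{C}$ of constant symbols, an interpreted lattice is $\mathcal{L}^+=(L,\leq,\sigma)$ with $\sigma:\mathcal{C}\to L$. A multi-valued concurrent game structure (mv-CGS) over $\mathcal{L}^+$ is $M=\langle \mathrm{Agt},Q,Act,d,t,AP,V,\mathcal{L}^+\rangle$ with finite sets of agents, states, actions and atomic propositions, action availability $d$, deterministic transition function $t$, and multi-valued valuation $V:AP\times Q\to L$. Formulas of mv-ATL*$_\to$: state formulas $\varphi::=c\mid p\mid\varphi\wedge\varphi\mid\varphi\vee\varphi\mid\varphi\to\varphi\mid\langle\!\langle A\rangle\!\rangle\gamma\mid[\![A]\!]\gamma$, path formulas $\gamma::=\varphi\mid\gamma\wedge\gamma\mid\gamma\vee\gamma\mid X\gamma\mid\gamma U\gamma\mid\gamma W\gamma$. Semantics: $[\![c]\!]_{M,q}=\sigma(c)$; $[\![p]\!]_{M,q}=V(p,q)$; $\wedge,\vee$ by $\sqcap,\sqcup$; $[\![X\gamma]\!]_{M,\lambda}=[\![\gamma]\!]_{M,\lambda[1..\infty]}$;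 $[\![\gamma_1U\gamma_2]\!]_{M,\lambda}=\bigsqcup_{i\ge 0}\inf_{0\le j<i}\{[\![\gamma_2]\!]_{M,\lambda[i..\infty]}\sqcap[\![\gamma_1]\!]_{M,\lambda[j..\infty]}\}$; $[\![\gamma_1W\gamma_2]\!]_{M,\lambda}=\inf_{i\ge0}[\![\gamma_1]\!]_{M,\lambda[i..\infty]}\sqcup[\![\gamma_1U\gamma_2]\!]_{M,\lambda}$; $[\![\langle\!\langle A\rangle\!\rangle\gamma]\!]_{M,q}=\bigsqcup_{s_A\in\Sigma_A}\inf_{\lambda\in out(q,s_A)}[\![\gamma]\!]_{M,\lambda}$; $[\![[\![A]\!]\gamma]\!]_{M,q}=\inf_{s_A}\bigsqcup_{\lambda\in out(q,s_A)}[\![\gamma]\!]_{M,\lambda}$; $[\![\varphi_1\to\varphi_2]\!]_{M,q}=\top$ if $[\![\varphi_1]\!]_{M,q}\le[\![\varphi_2]\!]_{M,q}$ and $\bot$ otherwise. A lattice reduction triple (LRT) is $(\mathcal{L},\mathcal{L}_f,f)$ where $\mathcal{L}_f=(L_f,\leq_f)$ is a sublattice of $\mathcal{L}$ and $f:L\to L_f$ preserves arbitrary bounds: $f(\inf_{i\in I}x_i)=\inf_{i\in I}f(x_i)$ and $f(\bigsqcup_{i\in I}x_i)=\bigsqcup_{i\in I}f(x_i)$. The image $f(M)$ of an mv-CGS $M$ has the same components except valuation $V_f(p,q)=f(V(p,q))$ and interpreted lattice $(L_f,\leq_f,\sigma_f)$ with $\sigma_f(c)=f(\sigma(c))$. A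 formula $\varphi$ satisfies the translation condition if for every state (resp. path) $\xi$: $[\![\varphi]\!]_{M,\xi}\in f^{-1}(x)$ iff $[\![\varphi]\!]_{f(M),\xi}=x$. *)

theory Defs
  imports Main
begin

text \<open>Lattice elements, states, agents, actions, atomic propositions and constant
symbols are all represented by natural numbers (every finite lattice / finite set
is isomorphic to one carried by a subset of nat).\<close>

definition is_glb :: "nat set \<Rightarrow> (nat \<Rightarrow> nat \<Rightarrow> bool) \<Rightarrow> nat set \<Rightarrow> nat \<Rightarrow> bool" where
  "is_glb A le X x \<longleftrightarrow> x \<in> A \<and> (\<forall>y\<in>X. le x y) \<and> (\<forall>z\<in>A. (\<forall>y\<in>X. le z y) \<longrightarrow> le z x)"

definition is_lub :: "nat set \<Rightarrow> (nat \<Rightarrow> nat \<Rightarrow> bool) \<Rightarrow> nat set \<Rightarrow> nat \<Rightarrow> bool" where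
  "is_lub A le X x \<longleftrightarrow> x \<in> A \<and> (\<forall>y\<in>X. le y x) \<and> (\<forall>z\<in>A. (\<forall>y\<in>X. le y z) \<longrightarrow> le x z)"

definition glb :: "nat set \<Rightarrow> (nat \<Rightarrow> nat \<Rightarrow> bool) \<Rightarrow> nat set \<Rightarrow> nat" where
  "glb A le X = (THE x. is_glb A le X x)"

definition lub :: "nat set \<Rightarrow> (nat \<Rightarrow> nat \<Rightarrow> bool) \<Rightarrow> nat set \<Rightarrow> nat" where
  "lub A le X = (THE x. is_lub A le X x)"

definition fin_lattice :: "nat set \<Rightarrow> (nat \<Rightarrow> nat \<Rightarrow> bool) \<Rightarrow> bool" where
  "fin_lattice A le \<longleftrightarrow> finite A \<and> A \<noteq> {}
     \<and> (\<forall>x\<in>A. le x x)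
     \<and> (\<forall>x\<in>A. \<forall>y\<in>A. le x y \<and> le y x \<longrightarrow> x = y)
     \<and> (\<forall>x\<in>A. \<forall>y\<in>A. \<forall>z\<in>A. le x y \<and> le y z \<longrightarrow> le x z)
     \<and> (\<forall>x\<in>A. \<forall>y\<in>A. (\<exists>m. is_glb A le {x, y} m) \<and> (\<exists>j. is_lub A le {x, y} j))"

definition restr :: "nat set \<Rightarrow> (nat \<Rightarrow> nat \<Rightarrow> bool) \<Rightarrow> nat \<Rightarrow> nat \<Rightarrow> bool" where
  "restr B le x y \<longleftrightarrow> x \<in> B \<and> y \<in> B \<and> le x y"

definition sublattice :: "nat set \<Rightarrow> (nat \<Rightarrow> nat \<Rightarrow> bool) \<Rightarrow> nat set \<Rightarrow> bool" where
  "sublattice A le B \<longleftrightarrow> B \<subseteq> A \<and> B \<noteq> {}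
     \<and> (\<forall>x\<in>B. \<forall>y\<in>B. glb A le {x, y} \<in> B \<and> lub A le {x, y} \<in> B)"

text \<open>Since L is finite,
an arbitrary family of elements of L is just a subset of L.\<close>
definition lrt :: "nat set \<Rightarrow> (nat \<Rightarrow> nat \<Rightarrow> bool) \<Rightarrow> nat set \<Rightarrow> (nat \<Rightarrow> nat) \<Rightarrow> bool" where
  "lrt L le Lf f \<longleftrightarrow> fin_lattice L le \<and> sublattice L le Lf
     \<and> (\<forall>x\<in>L. f x \<in> Lf)
     \<and> (\<forall>X. X \<subseteq> L \<longrightarrow> f (glb L le X) = glb Lf (restr Lf le) (f ` X))
     \<and> (\<forall>X. X \<subseteq> L \<longrightarrow> f (lub L le X) = lub Lf (restr Lf le) (f ` X))"

record mvcgs =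
  agt :: "nat set"
  st :: "nat set"
  act :: "nat set"
  avail :: "nat \<Rightarrow> nat \<Rightarrow> nat set"
  trans :: "nat \<Rightarrow> (nat \<Rightarrow> nat) \<Rightarrow> nat"
  aps :: "nat set"
  val :: "nat \<Rightarrow> nat \<Rightarrow> nat"
  lat :: "nat set"
  leq :: "nat \<Rightarrow> nat \<Rightarrow> bool"
  interp :: "nat \<Rightarrow> nat"

definition is_mvcgs :: "mvcgs \<Rightarrow> bool" where
  "is_mvcgs M \<longleftrightarrow> finite (agt M) \<and> finite (st M) \<and> st M \<noteq> {} \<and> finite (act M) \<and> finite (aps M)
     \<and> (\<forall>a\<in>agt M. \<forall>q\<in>st M. avail M a q \<subseteq> act M \<and> avail M a q \<noteq> {})
     \<and> (\<forall>q\<in>st M. \<forall>\<alpha>. (\<forall>a\<in>agt M. \<alpha> a \<in> avail M a q) \<longrightarrow> trans M q \<alpha> \<in> st M)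
     \<and> (\<forall>q \<alpha> \<beta>. (\<forall>a\<in>agt M. \<alpha> a = \<beta> a) \<longrightarrow> trans M q \<alpha> = trans M q \<beta>)
     \<and> fin_lattice (lat M) (leq M)
     \<and> (\<forall>p\<in>aps M. \<forall>q\<in>st M. val M p q \<in> lat M)
     \<and> (\<forall>c. interp M c \<in> lat M)"

definition meet :: "mvcgs \<Rightarrow> nat \<Rightarrow> nat \<Rightarrow> nat" where
  "meet M x y = glb (lat M) (leq M) {x, y}"
definition join :: "mvcgs \<Rightarrow> nat \<Rightarrow> nat \<Rightarrow> nat" where
  "join M x y = lub (lat M) (leq M) {x, y}"
definition Inf_M :: "mvcgs \<Rightarrow> nat set \<Rightarrow> nat" where
  "Inf_M M X = glb (lat M) (leq M) X"
definition Sup_M :: "mvcgs \<Rightarrow> nat set \<Rightarrow> nat" where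
  "Sup_M M X = lub (lat M) (leq M) X"
definition ltop :: "mvcgs \<Rightarrow> nat" where
  "ltop M = Inf_M M {}"
definition lbot :: "mvcgs \<Rightarrow> nat" where
  "lbot M = Sup_M M {}"

definition legal :: "mvcgs \<Rightarrow> nat \<Rightarrow> (nat \<Rightarrow> nat) \<Rightarrow> bool" where
  "legal M q \<alpha> \<longleftrightarrow> (\<forall>a\<in>agt M. \<alpha> a \<in> avail M a q)"

definition is_path :: "mvcgs \<Rightarrow> (nat \<Rightarrow> nat) \<Rightarrow> bool" where
  "is_path M l \<longleftrightarrow> (\<forall>i. l i \<in> st M) \<and> (\<forall>i. \<exists>\<alpha>. legal M (l i) \<alpha> \<and> l (Suc i) = trans M (l i) \<alpha>)"

definition suffix :: "(nat \<Rightarrow> nat) \<Rightarrow> nat \<Rightarrow> nat \<Rightarrow> nat" where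
  "suffix l i = (\<lambda>n. l (n + i))"

definition prefix :: "(nat \<Rightarrow> nat) \<Rightarrow> nat \<Rightarrow> nat list" where
  "prefix l i = map l [0..<Suc i]"

definition strategy :: "mvcgs \<Rightarrow> nat set \<Rightarrow> (nat \<Rightarrow> nat list \<Rightarrow> nat) \<Rightarrow> bool" where
  "strategy M A s \<longleftrightarrow> (\<forall>a\<in>A. \<forall>h. h \<noteq> [] \<and> set h \<subseteq> st M \<longrightarrow> s a h \<in> avail M a (last h))"

definition out :: "mvcgs \<Rightarrow> nat \<Rightarrow> nat set \<Rightarrow> (nat \<Rightarrow> nat list \<Rightarrow> nat) \<Rightarrow> (nat \<Rightarrow> nat) set" where
  "out M q A s = {l. l 0 = q \<and> (\<forall>i. \<exists>\<alpha>. legal M (l i) \<alpha>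
        \<and> (\<forall>a\<in>A. \<alpha> a = s a (prefix l i)) \<and> l (Suc i) = trans M (l i) \<alpha>)}"

datatype sform =
    Const nat
  | Prop nat
  | SAnd sform sform
  | SOr sform sform
  | Imp sform sform
  | Coal "nat set" pform
  | CoCoal "nat set" pform
and pform =
    St sform
  | PAnd pform pform
  | POr pform pform
  | Next pform
  | Until pform pform
  | WUntil pform pform

definition until_val :: "mvcgs \<Rightarrow> (nat \<Rightarrow> nat) \<Rightarrow> (nat \<Rightarrow> nat) \<Rightarrow> nat" where
  "until_val M v1 v2 = Sup_M M {meet M (v2 i) (Inf_M M {v1 j | j. j < i}) | i. True}"

primrec sem_s :: "mvcgs \<Rightarrow> nat \<Rightarrow> sform \<Rightarrow> nat"
  and sem_p :: "mvcgs \<Rightarrow> (nat \<Rightarrow> nat) \<Rightarrow> pform \<Rightarrow> nat" where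
  "sem_s M q (Const c) = interp M c"
| "sem_s M q (Prop p) = val M p q"
| "sem_s M q (SAnd a b) = meet M (sem_s M q a) (sem_s M q b)"
| "sem_s M q (SOr a b) = join M (sem_s M q a) (sem_s M q b)"
| "sem_s M q (Imp a b) = (if leq M (sem_s M q a) (sem_s M q b) then ltop M else lbot M)"
| "sem_s M q (Coal A g) =
     Sup_M M {Inf_M M {sem_p M l g | l. l \<in> out M q A s} | s. strategy M A s}"
| "sem_s M q (CoCoal A g) =
     Inf_M M {Sup_M M {sem_p M l g | l. l \<in> out M q A s} | s. strategy M A s}"
| "sem_p M l (St f) = sem_s M (l 0) f"
| "sem_p M l (PAnd a b) = meet M (sem_p M l a) (sem_p M l b)"
| "sem_p M l (POr a b) = join M (sem_p M l a) (sem_p M l b)"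
| "sem_p M l (Next g) = sem_p M (suffix l 1) g"
| "sem_p M l (Until g1 g2) =
     until_val M (\<lambda>i. sem_p M (suffix l i) g1) (\<lambda>i. sem_p M (suffix l i) g2)"
| "sem_p M l (WUntil g1 g2) =
     join M (Inf_M M {sem_p M (suffix l i) g1 | i. True})
            (until_val M (\<lambda>i. sem_p M (suffix l i) g1) (\<lambda>i. sem_p M (suffix l i) g2))"

primrec wf_s :: "mvcgs \<Rightarrow> sform \<Rightarrow> bool"
  and wf_p :: "mvcgs \<Rightarrow> pform \<Rightarrow> bool" where
  "wf_s M (Const c) = True"
| "wf_s M (Prop p) = (p \<in> aps M)"
| "wf_s M (SAnd a b) = (wf_s M a \<and> wf_s M b)"
| "wf_s M (SOr a b) = (wf_s M a \<and> wf_s M b)"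
| "wf_s M (Imp a b) = (wf_s M a \<and> wf_s M b)"
| "wf_s M (Coal A g) = (A \<subseteq> agt M \<and> wf_p M g)"
| "wf_s M (CoCoal A g) = (A \<subseteq> agt M \<and> wf_p M g)"
| "wf_p M (St f) = wf_s M f"
| "wf_p M (PAnd a b) = (wf_p M a \<and> wf_p M b)"
| "wf_p M (POr a b) = (wf_p M a \<and> wf_p M b)"
| "wf_p M (Next g) = wf_p M g"
| "wf_p M (Until a b) = (wf_p M a \<and> wf_p M b)"
| "wf_p M (WUntil a b) = (wf_p M a \<and> wf_p M b)"

definition fimg :: "(nat \<Rightarrow> nat) \<Rightarrow> nat set \<Rightarrow> mvcgs \<Rightarrow> mvcgs" where
  "fimg f Lf M = M\<lparr>val := (\<lambda>p q. f (val M p q)), lat := Lf, leq := restr Lf (leq M),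
                    interp := (\<lambda>c. f (interp M c))\<rparr>"

end

theory Submission
  imports Defs
begin

(* An implication is crisp: it is \<top> or \<bottom> according to whether its antecedent lies
   below its consequent.  A reduction map preserves all bounds but need not reflect the
   order.  Collapsing 1 and 2 in the chain 0 < 1 < 2 is such a map; with constants c0, c1
   interpreted as 2 and 1, the formula c0 \<rightarrow> c1 is \<bottom> in M but \<top> in f(M), since f 2 \<le> f 1. *)

lemma glb_eqI:
  assumes antisym: "\<And>x y. x \<in> A \<Longrightarrow> y \<in> A \<Longrightarrow> le x y \<Longrightarrow> le y x \<Longrightarrow> x = y"
    and m: "is_glb A le X m"
  shows "glb A le X = m"
  unfolding glb_def
proof (rule the_equality)
  show "is_glb A le X m" by (fact m)
  show "x = m" if "is_glb A le X x" for x
    using that m antisym unfolding is_glb_def by blast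
qed

lemma lub_eqI:
  assumes antisym: "\<And>x y. x \<in> A \<Longrightarrow> y \<in> A \<Longrightarrow> le x y \<Longrightarrow> le y x \<Longrightarrow> x = y"
    and m: "is_lub A le X m"
  shows "lub A le X = m"
  unfolding lub_def
proof (rule the_equality)
  show "is_lub A le X m" by (fact m)
  show "x = m" if "is_lub A le X x" for x
    using that m antisym unfolding is_lub_def by blast
qed

lemma glb_chain:
  assumes "finite A" "A \<noteq> {}" "X \<subseteq> A"
    and le: "\<And>x y. x \<in> A \<Longrightarrow> y \<in> A \<Longrightarrow> le x y \<longleftrightarrow> x \<le> y"
  shows "glb A le X = (if X = {} then Max A else Min X)"
proof (rule glb_eqI)
  show "x = y" if "x \<in> A" "y \<in> A" "le x y" "le y x" for x y
    using that le by simp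
  have "finite X" using assms finite_subset by blast
  then show "is_glb A le X (if X = {} then Max A else Min X)"
    using assms Min_in[of X] by (auto simp: is_glb_def le subset_iff)
qed

lemma lub_chain:
  assumes "finite A" "A \<noteq> {}" "X \<subseteq> A"
    and le: "\<And>x y. x \<in> A \<Longrightarrow> y \<in> A \<Longrightarrow> le x y \<longleftrightarrow> x \<le> y"
  shows "lub A le X = (if X = {} then Min A else Max X)"
proof (rule lub_eqI)
  show "x = y" if "x \<in> A" "y \<in> A" "le x y" "le y x" for x y
    using that le by simp
  have "finite X" using assms finite_subset by blast
  then show "is_lub A le X (if X = {} then Min A else Max X)"
    using assms Max_in[of X] by (auto simp: is_lub_def le subset_iff)
qed

lemma fin_lattice_chain:
  assumes "finite A" "A \<noteq> {}"
  shows "fin_lattice A (\<le>)"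
  unfolding fin_lattice_def
proof (intro conjI ballI)
  fix x y assume "x \<in> A" "y \<in> A"
  then have "is_glb A (\<le>) {x, y} (min x y)" "is_lub A (\<le>) {x, y} (max x y)"
    by (auto simp: is_glb_def is_lub_def min_def max_def)
  then show "\<exists>m. is_glb A (\<le>) {x, y} m" "\<exists>j. is_lub A (\<le>) {x, y} j"
    by blast+
qed (use assms in auto)

lemma sublattice_chain:
  assumes "finite A" "B \<subseteq> A" "B \<noteq> {}"
  shows "sublattice A (\<le>) B"
  unfolding sublattice_def
proof (intro conjI ballI)
  fix x y assume "x \<in> B" "y \<in> B"
  moreover have "A \<noteq> {}" "{x, y} \<subseteq> A" using assms \<open>x \<in> B\<close> \<open>y \<in> B\<close> by auto
  ultimately show "glb A (\<le>) {x, y} \<in> B" "lub A (\<le>) {x, y} \<in> B"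
    using glb_chain[of A "{x, y}" "(\<le>)"] lub_chain[of A "{x, y}" "(\<le>)"] assms(1)
    by (simp_all add: min_def max_def)
qed (use assms in auto)

lemma lrt_chain:
  assumes A: "finite A" and B: "B \<subseteq> A" "B \<noteq> {}"
    and f: "mono f" "f ` A \<subseteq> B" "f (Max A) = Max B" "f (Min A) = Min B"
  shows "lrt A (\<le>) B f"
  unfolding lrt_def
proof (intro conjI allI impI ballI)
  have A_ne: "A \<noteq> {}" and B_fin: "finite B" using A B finite_subset by auto
  have restr_B: "restr B (\<le>) x y \<longleftrightarrow> x \<le> y" if "x \<in> B" "y \<in> B" for x y
    using that by (simp add: restr_def)
  show "fin_lattice A (\<le>)" using A A_ne by (rule fin_lattice_chain)
  show "sublattice A (\<le>) B" using A B by (rule sublattice_chain)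
  show "f x \<in> B" if "x \<in> A" for x using that f(2) by blast
  fix X assume X: "X \<subseteq> A"
  then have "finite X" "f ` X \<subseteq> B" using A f(2) finite_subset by blast+
  then show "f (glb A (\<le>) X) = glb B (restr B (\<le>)) (f ` X)"
    "f (lub A (\<le>) X) = lub B (restr B (\<le>)) (f ` X)"
    using glb_chain[OF A A_ne X] lub_chain[OF A A_ne X]
      glb_chain[OF B_fin B(2) _ restr_B] lub_chain[OF B_fin B(2) _ restr_B]
      mono_Min_commute[OF f(1)] mono_Max_commute[OF f(1)] f(3,4)
    by auto
qed

definition collapse :: "nat \<Rightarrow> nat" where
  "collapse x = (if x = 0 then 0 else 2)"

lemma lrt_collapse: "lrt {0, 1, 2} (\<le>) {0, 2} collapse"
  by (rule lrt_chain) (auto simp: collapse_def mono_def)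

definition single_state_model :: mvcgs where
  "single_state_model = \<lparr>agt = {0}, st = {0}, act = {0}, avail = (\<lambda>_ _. {0}),
     trans = (\<lambda>_ _. 0), aps = {}, val = (\<lambda>_ _. 0), lat = {0, 1, 2}, leq = (\<le>),
     interp = (\<lambda>c. if c = 0 then 2 else 1)\<rparr>"

lemma is_mvcgs_single_state_model: "is_mvcgs single_state_model"
  using fin_lattice_chain[of "{0, 1, 2}"]
  by (auto simp: is_mvcgs_def single_state_model_def)

theorem proposition5p8:
  shows "\<exists>L le Lf f. lrt L le Lf f \<and>
    (\<exists>M. is_mvcgs M \<and> lat M = L \<and> leq M = le \<and>
      ((\<exists>\<phi> q x. wf_s M \<phi> \<and> q \<in> st M \<and> x \<in> Lf \<and>
          \<not> (sem_s M q \<phi> \<in> {y \<in> L. f y = x} \<longleftrightarrow> sem_s (fimg f Lf M) q \<phi> = x))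
     \<or> (\<exists>\<gamma> l x. wf_p M \<gamma> \<and> is_path M l \<and> x \<in> Lf \<and>
          \<not> (sem_p M l \<gamma> \<in> {y \<in> L. f y = x} \<longleftrightarrow> sem_p (fimg f Lf M) l \<gamma> = x))))"
proof -
  let ?M = single_state_model and ?\<phi> = "Imp (Const 0) (Const 1)"
  have "sem_s ?M 0 ?\<phi> = lub {0, 1, 2} (\<le>) {}"
    by (simp add: single_state_model_def lbot_def Sup_M_def)
  also have "\<dots> = 0" by (simp add: lub_chain)
  finally have sem_M: "sem_s ?M 0 ?\<phi> = 0" .
  have "sem_s (fimg collapse {0, 2} ?M) 0 ?\<phi> = glb {0, 2} (restr {0, 2} (\<le>)) {}"
    by (simp add: single_state_model_def fimg_def collapse_def restr_def ltop_def Inf_M_def)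
  also have "\<dots> = 2" by (subst glb_chain) (auto simp: restr_def)
  finally have sem_fM: "sem_s (fimg collapse {0, 2} ?M) 0 ?\<phi> = 2" .
  show ?thesis
    using lrt_collapse is_mvcgs_single_state_model sem_M sem_fM
    by (intro exI[of _ "{0, 1, 2}"] exI[of _ "(\<le>)"] exI[of _ "{0, 2}"] exI[of _ collapse]
        exI[of _ ?M] conjI disjI1 exI[of _ ?\<phi>] exI[of _ 0])
      (auto simp: single_state_model_def collapse_def)
qed

end
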